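(* Fix an orthonormal basis of $\mathbb{C}^n$ and let $e_{jk}$ denote the matrix units in that basis. Suppose every Lindblad operator is either a jump operator $\sqrt{\gamma_{jk}}\,e_{jk}$ with $j\neq k$, $\gamma_{jk}\ge0$, or a diagonal (de-phasing) operator $\sum_jc_je_{jj}$. Let $\pi_\iota=(e_{11},\dots,e_{nn})$ and let $\sigma.\pi_\iota$ be any permutation of it. Then the map $w:\mathbb{F}\to\mathbb{R}^{n^2-n}$, $\pi\mapsto(w^\pi_{jk})_{j\ne k}$, has vanishing differential at $\sigma.\pi_\iota$, and consequently for each fixed $\Lambda$ the map $\pi\mapsto\Omega^\pi\Lambda$ has a critical point at $\sigma.\pi_\iota$. Moreover, $A_\iota=\sum_k[L_k,L_k^\dagger]$ is diagonal in the fixed basis.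
   Context: $\mathbb{F}$: manifold of complete flags $\pi=(\pi_1,\dots,\pi_n)$ (mutually orthogonal rank-one projectors on $\mathbb{C}^n$ summing to $I$), i.e. the orbit of a fixed complete flag under conjugation by $U(n)$; its tangent directions at $\pi$ are generated by $h\in\mathfrak{su}(n)$ acting as $\pi_j\mapsto[h,\pi_j]$. $w^\pi_{jk}=\sum_m\mathrm{Tr}(\pi_jL_m\pi_kL_m^\dagger)$, $\Omega^\pi_{jk}=w^\pi_{jk}$ ($j\ne k$), $\Omega^\pi_{kk}=-\sum_{l\ne k}w^\pi_{lk}$. *)

theory Defs
  imports "HOL-Analysis.Analysis"
begin

type_synonym 'n cmat = "complex ^'n ^'n"

definition adj :: "'n::finite cmat \<Rightarrow> 'n cmat" where
  "adj A = (\<chi> i j. cnj (A $ j $ i))"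

definition mtrace :: "'n::finite cmat \<Rightarrow> complex" where
  "mtrace A = (\<Sum>i\<in>UNIV. A $ i $ i)"

definition commut :: "'n::finite cmat \<Rightarrow> 'n cmat \<Rightarrow> 'n cmat" where
  "commut A B = A ** B - B ** A"

definition mscale :: "complex \<Rightarrow> 'n::finite cmat \<Rightarrow> 'n cmat" where
  "mscale c A = (\<chi> i j. c * A $ i $ j)"

definition unitary :: "'n::finite cmat \<Rightarrow> bool" where
  "unitary U \<longleftrightarrow> adj U ** U = mat 1 \<and> U ** adj U = mat 1"

definition su :: "'n::finite cmat set" where
  "su = {h. adj h = - h \<and> mtrace h = 0}"

text \<open>Matrix units with respect to the orthonormal basis given by the columns of U:
  e_jk = U E_jk U^*, where E_jk is the standard matrix unit.\<close>
definition munit :: "'n::finite cmat \<Rightarrow> 'n \<Rightarrow> 'n \<Rightarrow> 'n cmat" where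
  "munit U j k = U ** (\<chi> a b. if a = j \<and> b = k then 1 else 0) ** adj U"

text \<open>A tuple of n matrices (a point of the ambient space containing the flag manifold)
  is a vector of matrices indexed by 'n.
  w^P_jk = sum_m Tr(P_j L_m P_k L_m^dagger), for Lindblad operators L_0,...,L_{N-1}.
  (It is real on flags; we take the real part so that w is real-valued everywhere.)\<close>
definition wfun :: "nat \<Rightarrow> (nat \<Rightarrow> 'n::finite cmat) \<Rightarrow> 'n cmat ^'n \<Rightarrow> 'n \<Rightarrow> 'n \<Rightarrow> real" where
  "wfun N L P j k = Re (\<Sum>m<N. mtrace (P $ j ** L m ** P $ k ** adj (L m)))"

definition Omega :: "nat \<Rightarrow> (nat \<Rightarrow> 'n::finite cmat) \<Rightarrow> 'n cmat ^'n \<Rightarrow> real ^'n ^'n" where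
  "Omega N L P = (\<chi> j k. if j \<noteq> k then wfun N L P j k
                         else - (\<Sum>l\<in>UNIV - {k}. wfun N L P l k))"

definition tangent :: "'n::finite cmat \<Rightarrow> 'n cmat ^'n \<Rightarrow> 'n cmat ^'n" where
  "tangent h P = (\<chi> j. commut h (P $ j))"

definition admissible_lindblad :: "'n::finite cmat \<Rightarrow> 'n cmat \<Rightarrow> bool" where
  "admissible_lindblad U A \<longleftrightarrow>
     (\<exists>j k \<gamma>. j \<noteq> k \<and> \<gamma> \<ge> 0 \<and> A = mscale (complex_of_real (sqrt \<gamma>)) (munit U j k))
   \<or> (\<exists>c :: 'n \<Rightarrow> complex. A = (\<Sum>j\<in>UNIV. mscale (c j) (munit U j j)))"

end

theory Submission imports Defs begin

text \<open>
  In the basis given by the columns of \<open>U\<close>, every admissible Lindblad operator has at most one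
  nonzero entry in each row and in each column, so conjugating a diagonal matrix by it, or by its
  adjoint, gives a diagonal matrix again. At a flag \<open>P\<close> all of whose projectors are diagonal, the
  differential of \<open>w\<^sub>j\<^sub>k\<close> along the tangent vector generated by \<open>h\<close> is a sum of terms
  \<open>Tr([h, P\<^sub>k] L\<^sup>\<dagger> P\<^sub>j L)\<close> and \<open>Tr([h, P\<^sub>j] L P\<^sub>k L\<^sup>\<dagger>)\<close>, and \<open>Tr([h, X] Y) = 0\<close> whenever \<open>X\<close>
  and \<open>Y\<close> commute. The differential of \<open>\<Omega>\<^sup>P \<Lambda>\<close> is a linear combination of these. Finally
  \<open>[L, L\<^sup>\<dagger>] = L L\<^sup>\<dagger> - L\<^sup>\<dagger> L\<close> is a difference of conjugates of the identity, hence diagonal.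
\<close>

lemma matrix_mult_nth: "(A ** B) $ i $ j = (\<Sum>k\<in>UNIV. A $ i $ k * B $ k $ j)"
  by (simp add: matrix_matrix_mult_def)

lemma matrix_diff_ldistrib: "(C::'a::ring_1^'n::finite^'m) ** (A - B) = C ** A - C ** B"
  by (simp add: vec_eq_iff matrix_mult_nth right_diff_distrib sum_subtractf)

lemma matrix_diff_rdistrib: "((A::'a::ring_1^'n::finite^'m) - B) ** C = A ** C - B ** C"
  by (simp add: vec_eq_iff matrix_mult_nth left_diff_distrib sum_subtractf)

lemma matrix_sum_ldistrib: "(C::'a::semiring_1^'n::finite^'m) ** (\<Sum>x\<in>S. A x) = (\<Sum>x\<in>S. C ** A x)"
  by (simp add: vec_eq_iff matrix_mult_nth sum_distrib_left, subst sum.swap, simp)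

lemma matrix_sum_rdistrib: "(\<Sum>x\<in>S. (A x::'a::semiring_1^'n^'m)) ** (C::'a^'p^'n::finite) = (\<Sum>x\<in>S. A x ** C)"
  by (simp add: vec_eq_iff matrix_mult_nth sum_distrib_right, subst sum.swap, simp)

lemma adj_nth [simp]: "adj A $ i $ j = cnj (A $ j $ i)"
  by (simp add: adj_def)

lemma adj_adj [simp]: "adj (adj A) = A"
  by (simp add: vec_eq_iff)

lemma adj_mult: "adj ((A::'n::finite cmat) ** B) = adj B ** adj A"
  by (simp add: vec_eq_iff matrix_mult_nth mult.commute)

lemma mscale_nth [simp]: "mscale c A $ i $ j = c * A $ i $ j"
  by (simp add: mscale_def)

lemma mscale_mult_left: "mscale c A ** B = mscale c (A ** B)"
  by (simp add: vec_eq_iff matrix_mult_nth sum_distrib_left mult.assoc)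

lemma mscale_mult_right: "B ** mscale c A = mscale c (B ** A)"
  by (simp add: vec_eq_iff matrix_mult_nth sum_distrib_left mult.left_commute)

lemma mtrace_diff: "mtrace (A - B) = mtrace A - mtrace B"
  by (simp add: mtrace_def sum_subtractf)

lemma mtrace_mult: "mtrace ((A::'n::finite cmat) ** B) = (\<Sum>i\<in>UNIV. \<Sum>k\<in>UNIV. A $ i $ k * B $ k $ i)"
  by (simp add: mtrace_def matrix_mult_nth)

lemma mtrace_mult_commute: "mtrace ((A::'n::finite cmat) ** B) = mtrace (B ** A)"
  unfolding mtrace_mult by (subst sum.swap) (simp add: mult.commute)

lemma mtrace_mult4_rotate:
  fixes A B C D :: "'n::finite cmat"
  shows "mtrace (A ** B ** C ** D) = mtrace (C ** (D ** A ** B))"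
proof -
  have "mtrace (A ** B ** C ** D) = mtrace ((A ** B) ** (C ** D))"
    by (simp add: matrix_mul_assoc)
  also have "\<dots> = mtrace ((C ** D) ** (A ** B))"
    by (rule mtrace_mult_commute)
  finally show ?thesis
    by (simp add: matrix_mul_assoc)
qed

lemma linear_mtrace_mult_right: "linear (\<lambda>X::'n::finite cmat. mtrace (X ** M))"
  by (rule linearI) (simp_all add: mtrace_mult distrib_right sum.distrib scaleR_sum_right)

lemma mtrace_commut_mult_eq_0:
  assumes "(X::'n::finite cmat) ** Y = Y ** X"
  shows "mtrace (commut h X ** Y) = 0"
proof -
  have "mtrace (X ** h ** Y) = mtrace (h ** Y ** X)"
    by (metis matrix_mul_assoc mtrace_mult_commute)
  also have "\<dots> = mtrace (h ** X ** Y)"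
    by (metis assms matrix_mul_assoc)
  finally show ?thesis
    by (simp add: commut_def matrix_diff_rdistrib mtrace_diff)
qed

definition in_basis :: "'n::finite cmat \<Rightarrow> 'n cmat \<Rightarrow> 'n cmat" where
  "in_basis U X = adj U ** X ** U"

definition diag_mat :: "'n::finite cmat \<Rightarrow> bool" where
  "diag_mat X \<longleftrightarrow> (\<forall>i l. i \<noteq> l \<longrightarrow> X $ i $ l = 0)"

abbreviation diag_in :: "'n::finite cmat \<Rightarrow> 'n cmat \<Rightarrow> bool" where
  "diag_in U X \<equiv> diag_mat (in_basis U X)"

lemma unitaryD: "unitary U \<Longrightarrow> adj U ** U = mat 1" "unitary U \<Longrightarrow> U ** adj U = mat 1"
  by (auto simp: unitary_def)

lemma in_basis_mult:
  assumes "unitary U" shows "in_basis U (X ** Y) = in_basis U X ** in_basis U Y"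
proof -
  have "in_basis U X ** in_basis U Y = adj U ** X ** (U ** adj U) ** Y ** U"
    by (simp only: in_basis_def matrix_mul_assoc)
  then show ?thesis
    by (simp add: unitaryD[OF assms] in_basis_def matrix_mul_assoc)
qed

lemma in_basis_inverse:
  assumes "unitary U" shows "U ** in_basis U X ** adj U = X"
proof -
  have "U ** in_basis U X ** adj U = (U ** adj U) ** X ** (U ** adj U)"
    by (simp only: in_basis_def matrix_mul_assoc)
  then show ?thesis
    by (simp add: unitaryD[OF assms])
qed

lemma in_basis_inject:
  assumes "unitary U" shows "in_basis U X = in_basis U Y \<longleftrightarrow> X = Y"
  by (metis in_basis_inverse[OF assms])

lemma in_basis_adj: "in_basis U (adj X) = adj (in_basis U X)"
  by (simp add: in_basis_def adj_mult matrix_mul_assoc)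

lemma in_basis_diff: "in_basis U (X - Y) = in_basis U X - in_basis U Y"
  by (simp add: in_basis_def matrix_diff_rdistrib matrix_diff_ldistrib)

lemma in_basis_sum: "in_basis U (\<Sum>x\<in>S. A x) = (\<Sum>x\<in>S. in_basis U (A x))"
  by (simp add: in_basis_def matrix_sum_rdistrib matrix_sum_ldistrib)

lemma in_basis_mscale: "in_basis U (mscale c X) = mscale c (in_basis U X)"
  by (simp add: in_basis_def mscale_mult_left mscale_mult_right)

lemma in_basis_munit:
  assumes "unitary U"
  shows "in_basis U (munit U j k) = (\<chi> a b. if a = j \<and> b = k then 1 else 0)"
proof -
  have "in_basis U (munit U j k) = (adj U ** U) ** (\<chi> a b. if a = j \<and> b = k then 1 else 0) ** (adj U ** U)"
    by (simp only: in_basis_def munit_def matrix_mul_assoc)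
  then show ?thesis
    by (simp add: unitaryD[OF assms])
qed

lemma in_basis_mat_1:
  assumes "unitary U" shows "in_basis U (mat 1) = mat 1"
  by (simp add: in_basis_def unitaryD[OF assms])

lemma diag_mat_diff: "diag_mat X \<Longrightarrow> diag_mat Y \<Longrightarrow> diag_mat (X - Y)"
  by (simp add: diag_mat_def)

lemma diag_mat_sum: "(\<And>x. x \<in> S \<Longrightarrow> diag_mat (A x)) \<Longrightarrow> diag_mat (\<Sum>x\<in>S. A x)"
  by (simp add: diag_mat_def sum_component)

lemma diag_mat_mult_nth:
  assumes "diag_mat D" shows "(M ** D) $ i $ y = M $ i $ y * D $ y $ y"
proof -
  have "(M ** D) $ i $ y = (\<Sum>k\<in>UNIV. if k = y then M $ i $ y * D $ y $ y else 0)"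
    unfolding matrix_mult_nth by (rule sum.cong) (use assms in \<open>auto simp: diag_mat_def\<close>)
  then show ?thesis by simp
qed

lemma diag_mat_mult_commute:
  assumes "diag_mat A" "diag_mat B" shows "A ** B = B ** A"
proof -
  have "(A ** B) $ i $ l = (B ** A) $ i $ l" for i l
    using assms unfolding diag_mat_mult_nth[OF assms(2)] diag_mat_mult_nth[OF assms(1)]
    by (cases "i = l") (auto simp: diag_mat_def mult.commute)
  then show ?thesis by (simp add: vec_eq_iff)
qed

lemma diag_in_mult_commute:
  assumes "unitary U" "diag_in U X" "diag_in U Y" shows "X ** Y = Y ** X"
  using diag_mat_mult_commute[OF assms(2,3)]
  by (simp flip: in_basis_mult[OF assms(1)] add: in_basis_inject[OF assms(1)])

subsection \<open>Partial monomial matrices\<close>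

definition partial_monomial :: "'n::finite cmat \<Rightarrow> bool" where
  "partial_monomial M \<longleftrightarrow> (\<forall>i i' l. i \<noteq> i' \<longrightarrow> M $ i $ l * M $ i' $ l = 0)
                        \<and> (\<forall>x i l. i \<noteq> l \<longrightarrow> M $ x $ i * M $ x $ l = 0)"

lemma partial_monomial_adj: "partial_monomial (adj M) \<longleftrightarrow> partial_monomial M"
  unfolding partial_monomial_def adj_nth
  by (metis complex_cnj_mult complex_cnj_zero_iff)

lemma diag_mat_conj_partial_monomial:
  fixes M :: "'n::finite cmat"
  assumes "partial_monomial M" "diag_mat D" shows "diag_mat (M ** D ** adj M)"
  unfolding diag_mat_def
proof (intro allI impI)
  fix i l :: 'n assume "i \<noteq> l"
  have "M $ i $ y * M $ l $ y = 0" for y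
    using assms(1) \<open>i \<noteq> l\<close> by (auto simp: partial_monomial_def)
  then have "M $ i $ y * D $ y $ y * cnj (M $ l $ y) = 0" for y
    by (metis mult_eq_0_iff complex_cnj_zero_iff)
  then show "(M ** D ** adj M) $ i $ l = 0"
    unfolding matrix_mult_nth[of "M ** D"] diag_mat_mult_nth[OF assms(2)] adj_nth
    by (simp add: sum.neutral)
qed

lemma diag_mat_conj_adj_partial_monomial:
  "partial_monomial M \<Longrightarrow> diag_mat D \<Longrightarrow> diag_mat (adj M ** D ** M)"
  using diag_mat_conj_partial_monomial[of "adj M"] by (simp add: partial_monomial_adj)

lemma partial_monomial_admissible:
  assumes "unitary U" "admissible_lindblad U L" shows "partial_monomial (in_basis U L)"
  using assms(2) unfolding admissible_lindblad_def
proof (elim disjE exE conjE)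
  fix j k \<gamma> assume "L = mscale (complex_of_real (sqrt \<gamma>)) (munit U j k)"
  then show "partial_monomial (in_basis U L)"
    by (auto simp: in_basis_mscale in_basis_munit[OF assms(1)] partial_monomial_def)
next
  fix c assume "L = (\<Sum>j\<in>UNIV. mscale (c j) (munit U j j))"
  then have "in_basis U L $ a $ b = (\<Sum>j\<in>UNIV. if a = j \<and> b = j then c j else 0)" for a b
    by (simp add: in_basis_sum in_basis_mscale in_basis_munit[OF assms(1)] sum_component
        if_distrib[of "(*) _"] cong: if_cong)
  also have "\<dots> a b = (if a = b then c a else 0)" for a b
    by (cases "a = b") (simp_all add: sum.neutral)
  finally have entries: "in_basis U L $ a $ b = (if a = b then c a else 0)" for a b .
  show "partial_monomial (in_basis U L)"
    unfolding partial_monomial_def entries by simp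
qed

lemma diag_in_conj_admissible:
  assumes "unitary U" "admissible_lindblad U L" "diag_in U X"
  shows "diag_in U (L ** X ** adj L)" "diag_in U (adj L ** X ** L)"
  using diag_mat_conj_partial_monomial diag_mat_conj_adj_partial_monomial
    partial_monomial_admissible[OF assms(1,2)] assms(3)
  by (simp_all add: in_basis_mult[OF assms(1)] in_basis_adj)

lemma diag_in_diagonal_munit:
  assumes "unitary U" shows "diag_in U (munit U a a)"
  by (simp add: in_basis_munit[OF assms] diag_mat_def)

lemma diag_in_lindblad_commutator_sum:
  assumes "unitary U" "\<forall>m<N. admissible_lindblad U (L m)"
  shows "diag_in U (\<Sum>m<N. commut (L m) (adj (L m)))"
proof -
  have "diag_in U (mat 1)"
    unfolding in_basis_mat_1[OF assms(1)] by (simp add: diag_mat_def mat_def)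
  then have "diag_in U (L m ** mat 1 ** adj (L m))" "diag_in U (adj (L m) ** mat 1 ** L m)"
    if "m < N" for m
    using diag_in_conj_admissible[OF assms(1)] assms(2) that by blast+
  then show ?thesis
    unfolding in_basis_sum commut_def in_basis_diff
    by (intro diag_mat_sum diag_mat_diff) (simp_all add: matrix_mul_rid)
qed

subsection \<open>Differentials at flags diagonal in the basis\<close>

lemma bounded_bilinear_mtrace_conj:
  "bounded_bilinear (\<lambda>X Y::'n::finite cmat. mtrace (X ** C ** Y ** adj C))"
proof -
  have "linear (\<lambda>Y. mtrace (X ** C ** Y ** adj C))" for X
    unfolding mtrace_mult4_rotate by (rule linear_mtrace_mult_right)
  moreover have "linear (\<lambda>X. mtrace (X ** C ** Y ** adj C))" for Y
    using linear_mtrace_mult_right[of "C ** Y ** adj C"] by (simp add: matrix_mul_assoc)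
  ultimately show ?thesis
    by (simp add: bilinear_def flip: bilinear_conv_bounded_bilinear)
qed

definition wfun_diff ::
  "nat \<Rightarrow> (nat \<Rightarrow> 'n::finite cmat) \<Rightarrow> 'n cmat ^'n \<Rightarrow> 'n \<Rightarrow> 'n \<Rightarrow> 'n cmat ^'n \<Rightarrow> real" where
  "wfun_diff N L P j k Q = Re (\<Sum>m<N. mtrace (P $ j ** L m ** Q $ k ** adj (L m))
                                     + mtrace (Q $ j ** L m ** P $ k ** adj (L m)))"

lemma wfun_has_derivative: "((\<lambda>P. wfun N L P j k) has_derivative wfun_diff N L P j k) (at P)"
  unfolding wfun_def wfun_diff_def[abs_def]
  by (intro bounded_linear.has_derivative[OF bounded_linear_Re] has_derivative_sum
      bounded_bilinear.FDERIV[OF bounded_bilinear_mtrace_conj]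
      bounded_linear.has_derivative[OF bounded_linear_vec_nth has_derivative_ident])

lemma wfun_diff_tangent_eq_0:
  assumes U: "unitary U" and L: "\<forall>m<N. admissible_lindblad U (L m)"
    and P: "\<And>i. diag_in U (P $ i)"
  shows "wfun_diff N L P j k (tangent h P) = 0"
proof -
  have "mtrace (P $ j ** L m ** commut h (P $ k) ** adj (L m)) = 0"
       "mtrace (commut h (P $ j) ** L m ** P $ k ** adj (L m)) = 0" if "m < N" for m
  proof -
    have "diag_in U (adj (L m) ** P $ j ** L m)" "diag_in U (L m ** P $ k ** adj (L m))"
      using diag_in_conj_admissible[OF U _ P] L \<open>m < N\<close> by auto
    then have "P $ k ** (adj (L m) ** P $ j ** L m) = (adj (L m) ** P $ j ** L m) ** P $ k"
         "P $ j ** (L m ** P $ k ** adj (L m)) = (L m ** P $ k ** adj (L m)) ** P $ j"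
      by (simp_all add: diag_in_mult_commute[OF U P])
    then have "mtrace (commut h (P $ k) ** (adj (L m) ** P $ j ** L m)) = 0"
      and "mtrace (commut h (P $ j) ** (L m ** P $ k ** adj (L m))) = 0"
      by (simp_all add: mtrace_commut_mult_eq_0)
    then show "mtrace (P $ j ** L m ** commut h (P $ k) ** adj (L m)) = 0"
      and "mtrace (commut h (P $ j) ** L m ** P $ k ** adj (L m)) = 0"
      by (simp_all only: mtrace_mult4_rotate[of "P $ j"] matrix_mul_assoc)
  qed
  then show ?thesis
    by (simp add: wfun_diff_def tangent_def)
qed

definition Omega_diff ::
  "nat \<Rightarrow> (nat \<Rightarrow> 'n::finite cmat) \<Rightarrow> 'n cmat ^'n \<Rightarrow> 'n cmat ^'n \<Rightarrow> real ^'n ^'n" where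
  "Omega_diff N L P Q = (\<chi> j k. if j \<noteq> k then wfun_diff N L P j k Q
                                else - (\<Sum>l\<in>UNIV - {k}. wfun_diff N L P l k Q))"

lemma Omega_nth_has_derivative:
  "((\<lambda>P. Omega N L P $ j $ k) has_derivative (\<lambda>Q. Omega_diff N L P Q $ j $ k)) (at P)"
proof (cases "j = k")
  case True
  then show ?thesis
    unfolding Omega_def Omega_diff_def
    by (simp, intro has_derivative_minus has_derivative_sum wfun_has_derivative)
next
  case False
  then show ?thesis
    unfolding Omega_def Omega_diff_def by (simp add: wfun_has_derivative)
qed

lemma matrix_vector_mult_has_derivative:
  fixes f :: "'a::real_normed_vector \<Rightarrow> real ^'m::finite ^'n::finite"
  assumes "\<And>i k. ((\<lambda>x. f x $ i $ k) has_derivative (\<lambda>v. f' v $ i $ k)) (at x)"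
  shows "((\<lambda>x. f x *v c) has_derivative (\<lambda>v. f' v *v c)) (at x)"
proof (rule has_derivative_componentwise_within[THEN iffD2], intro ballI)
  fix b :: "real ^'n" assume "b \<in> Basis"
  then obtain i where b: "b = axis i 1"
    by (auto simp: Basis_vec_def)
  show "((\<lambda>y. (f y *v c) \<bullet> b) has_derivative (\<lambda>v. (f' v *v c) \<bullet> b)) (at x)"
    unfolding b inner_axis matrix_vector_mult_def
    by (simp, intro has_derivative_sum has_derivative_mult_left assms)
qed

lemma Omega_mult_has_derivative:
  "((\<lambda>P. Omega N L P *v \<Lambda>) has_derivative (\<lambda>Q. Omega_diff N L P Q *v \<Lambda>)) (at P)"
  by (rule matrix_vector_mult_has_derivative[OF Omega_nth_has_derivative])

lemma Omega_diff_tangent_eq_0: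
  assumes "unitary U" "\<forall>m<N. admissible_lindblad U (L m)" "\<And>i. diag_in U (P $ i)"
  shows "Omega_diff N L P (tangent h P) = 0"
  unfolding Omega_diff_def wfun_diff_tangent_eq_0[OF assms] by (simp add: vec_eq_iff)

theorem mainTheorem12:
  fixes U :: "'n::finite cmat" and L :: "nat \<Rightarrow> 'n cmat" and N :: nat
    and \<sigma> :: "'n \<Rightarrow> 'n"
  assumes "unitary U"
    and "\<forall>m<N. admissible_lindblad U (L m)"
    and "bij \<sigma>"
  defines "P0 \<equiv> (\<chi> j. munit U (\<sigma> j) (\<sigma> j))"
  shows "(\<forall>j k. j \<noteq> k \<longrightarrow>
            (\<exists>D. ((\<lambda>P. wfun N L P j k) has_derivative D) (at P0)
                 \<and> (\<forall>h\<in>su. D (tangent h P0) = 0)))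
       \<and> (\<forall>\<Lambda> :: real ^'n.
            \<exists>D. ((\<lambda>P. Omega N L P *v \<Lambda>) has_derivative D) (at P0)
                 \<and> (\<forall>h\<in>su. D (tangent h P0) = 0))
       \<and> (let A = (\<Sum>m<N. commut (L m) (adj (L m))) in
            \<forall>j k. j \<noteq> k \<longrightarrow> (adj U ** A ** U) $ j $ k = 0)"
proof -
  have P0_diag: "diag_in U (P0 $ i)" for i
    by (simp add: P0_def diag_in_diagonal_munit[OF assms(1)])
  show ?thesis
  proof (intro conjI allI impI)
    fix j k :: 'n
    show "\<exists>D. ((\<lambda>P. wfun N L P j k) has_derivative D) (at P0) \<and> (\<forall>h\<in>su. D (tangent h P0) = 0)"
      by (intro exI[of _ "wfun_diff N L P0 j k"] conjI ballI wfun_has_derivative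
          wfun_diff_tangent_eq_0[OF assms(1,2) P0_diag])
  next
    fix \<Lambda> :: "real ^'n"
    show "\<exists>D. ((\<lambda>P. Omega N L P *v \<Lambda>) has_derivative D) (at P0) \<and> (\<forall>h\<in>su. D (tangent h P0) = 0)"
      by (intro exI[of _ "\<lambda>Q. Omega_diff N L P0 Q *v \<Lambda>"] conjI ballI Omega_mult_has_derivative)
        (simp add: Omega_diff_tangent_eq_0[OF assms(1,2) P0_diag])
  next
    show "let A = \<Sum>m<N. commut (L m) (adj (L m)) in \<forall>j k. j \<noteq> k \<longrightarrow> (adj U ** A ** U) $ j $ k = 0"
      using diag_in_lindblad_commutator_sum[OF assms(1,2)] by (simp only: Let_def diag_mat_def in_basis_def)
  qed
qed

end
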